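(* In the HTLC setting described in the context, $\mathcal{B}$ cannot bribe the miners in this manner (i.e. make it a subgame perfect equilibrium for all miners to include unrelated transactions until round $T$ and include $tx^{h}_{\mathcal{B}}$ in round $T$ by offering a fee $f^{h}_{\mathcal{B}}>\frac{f^{h}_{\mathcal{A}}-f}{\lambda_{\min}}+f$) if $\mathcal{A}$'s transaction $tx^{h}_{\mathcal{A}}$ offers a fee $f^{h}_{\mathcal{A}}>\lambda_{\min}\,(v^{\mathrm{dep}}-f)+f$.
   Context: Blockchain model: $n$ miners; miner $i$ has mining power $\lambda_i>0$, $\sum_i\lambda_i=1$, $\lambda_{\min}=\min_i\lambda_i$. Each round exactly one miner is chosen, miner $i$ with probability $\lambda_i$, and creates a block containing one transaction of her choice, receiving its fee. An unrelated transaction offering base fee $f$ is always available. A contract can be redeemed at most once. Miners are rational, non-myopic, with perfect information. HTLC: a contract holding $v^{\mathrm{dep}}$ tokens initiated in block $b_j$, with digest $dig_a=H(pre_a)$ and timeout $T$, redeemable via htlc-A (signature of $\mathcal{A}$ and $pre_a$; any block) or htlc-B (signature of $\mathcal{B}$; only at least $T$ blocks after initiation). $\mathcal{A}$ publishes in the first round $tx^{h}_{\mathcal{A}}$ redeeming via htlc-A with fee $f^{h}_{\mathcal{A}}$; $\mathcal{B}$'s bribing transaction $tx^{h}_{\mathcal{B}}$ redeems via htlc-B and its fee $f^{h}_{\mathcal{B}}$ cannot exceed the contract's tokens $v^{\mathrm{dep}}$. The HTLC game has $T$ rounds creating $b_{j+1},\dots,b_{j+T}$; a miner can include an unrelated transaction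 in any round, $tx^{h}_{\mathcal{A}}$ in any round while the HTLC is unredeemed, and $tx^{h}_{\mathcal{B}}$ only in round $T$ while the HTLC is unredeemed. *)

theory Defs
  imports Complex_Main
begin

text \<open>Miners are the elements of a finite type 'm; miner j is chosen in
each round with probability lam j. A history is the list of (chosen miner, included
transaction) for the rounds played so far; the current round is length h + 1
(round k creates block b_(j+k)).\<close>

datatype act = Unrel | IncA | IncB

type_synonym 'm hist = "('m \<times> act) list"
type_synonym 'm strat_profile = "'m \<Rightarrow> 'm hist \<Rightarrow> act"

definition redeemed :: "'m hist \<Rightarrow> bool" where
  "redeemed h \<longleftrightarrow> (\<exists>x \<in> set h. snd x \<noteq> Unrel)"

definition feasible :: "nat \<Rightarrow> 'm hist \<Rightarrow> act \<Rightarrow> bool" where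
  "feasible T h a \<longleftrightarrow>
     a = Unrel \<or> (a = IncA \<and> \<not> redeemed h) \<or> (a = IncB \<and> length h + 1 = T \<and> \<not> redeemed h)"

definition valid_hist :: "nat \<Rightarrow> 'm hist \<Rightarrow> bool" where
  "valid_hist T h \<longleftrightarrow> length h \<le> T \<and> (\<forall>k < length h. feasible T (take k h) (snd (h ! k)))"

definition valid_strat :: "nat \<Rightarrow> ('m hist \<Rightarrow> act) \<Rightarrow> bool" where
  "valid_strat T s \<longleftrightarrow> (\<forall>h. length h < T \<longrightarrow> feasible T h (s h))"

definition fee :: "real \<Rightarrow> real \<Rightarrow> real \<Rightarrow> act \<Rightarrow> real" where
  "fee f fA fB a = (case a of Unrel \<Rightarrow> f | IncA \<Rightarrow> fA | IncB \<Rightarrow> fB)"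

fun util :: "('m::finite \<Rightarrow> real) \<Rightarrow> real \<Rightarrow> real \<Rightarrow> real \<Rightarrow> 'm strat_profile
              \<Rightarrow> 'm \<Rightarrow> nat \<Rightarrow> 'm hist \<Rightarrow> real" where
  "util lam f fA fB \<sigma> i 0 h = 0"
| "util lam f fA fB \<sigma> i (Suc m) h =
     (\<Sum>j\<in>UNIV. lam j * ((if j = i then fee f fA fB (\<sigma> j h) else 0)
                          + util lam f fA fB \<sigma> i m (h @ [(j, \<sigma> j h)])))"

definition payoff :: "('m::finite \<Rightarrow> real) \<Rightarrow> real \<Rightarrow> real \<Rightarrow> real \<Rightarrow> nat \<Rightarrow> 'm strat_profile
              \<Rightarrow> 'm \<Rightarrow> 'm hist \<Rightarrow> real" where
  "payoff lam f fA fB T \<sigma> i h = util lam f fA fB \<sigma> i (T - length h) h"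

definition is_SPE :: "('m::finite \<Rightarrow> real) \<Rightarrow> real \<Rightarrow> real \<Rightarrow> real \<Rightarrow> nat \<Rightarrow> 'm strat_profile \<Rightarrow> bool" where
  "is_SPE lam f fA fB T \<sigma> \<longleftrightarrow>
     (\<forall>j. valid_strat T (\<sigma> j)) \<and>
     (\<forall>i s h. valid_strat T s \<longrightarrow> valid_hist T h \<longrightarrow>
        payoff lam f fA fB T (\<sigma>(i := s)) i h \<le> payoff lam f fA fB T \<sigma> i h)"

definition bribe_profile :: "nat \<Rightarrow> 'm strat_profile" where
  "bribe_profile T j h = (if length h + 1 = T \<and> \<not> redeemed h then IncB else Unrel)"

end

theory Submission
  imports Defs
begin

text \<open>Suppose every miner follows the bribing profile and consider the subgame at
round T-1 with the HTLC unredeemed. If miner i deviates there by including tx_A, she gains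
lam_i (fA - f) in round T-1 and loses only in the event that she also mines round T, which
costs her lam_i * lam_i (fB - f). So the bribing profile can be an equilibrium only if
fA - f \<le> lam_i (fB - f) for every miner i; with the miner of least mining power this forces
fB > vdep, which the contract cannot pay.\<close>

lemma util_Suc_0:
  "util lam f fA fB \<sigma> i (Suc 0) h = lam i * fee f fA fB (\<sigma> i h)"
  by (simp add: if_distrib[of "\<lambda>x. lam _ * x"] cong: if_cong)

lemma util_Suc_Suc_0:
  "util lam f fA fB \<sigma> i (Suc (Suc 0)) h =
     (\<Sum>j\<in>UNIV. lam j * ((if j = i then fee f fA fB (\<sigma> j h) else 0)
                          + lam i * fee f fA fB (\<sigma> i (h @ [(j, \<sigma> j h)]))))"
  by (subst util.simps(2)) (simp only: util_Suc_0)

lemma sum_mult_if_eq: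
  fixes w :: "'m::finite \<Rightarrow> 'a::comm_ring_1"
  shows "(\<Sum>j\<in>UNIV. w j * (if j = i then a else b)) = w i * a + ((\<Sum>j\<in>UNIV. w j) - w i) * b"
proof -
  have "(\<Sum>j\<in>UNIV. w j * (if j = i then a else b)) = w i * a + (\<Sum>j\<in>UNIV-{i}. w j * b)"
    by (subst sum.remove[of _ i]) (auto intro!: sum.cong)
  also have "(\<Sum>j\<in>UNIV-{i}. w j * b) = ((\<Sum>j\<in>UNIV. w j) - w i) * b"
    by (simp add: sum_distrib_right[symmetric] sum_diff1)
  finally show ?thesis .
qed

lemma redeemed_snoc_unredeemed:
  "\<not> redeemed h \<Longrightarrow> redeemed (h @ [(j, a)]) \<longleftrightarrow> a \<noteq> Unrel"
  by (auto simp: redeemed_def)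

lemma payoff_bribe_profile_two_rounds_left:
  fixes lam :: "'m::finite \<Rightarrow> real"
  assumes lam_sum: "(\<Sum>j\<in>UNIV. lam j) = 1"
    and len: "length h + 2 = T" and unredeemed: "\<not> redeemed h"
  shows "payoff lam f fA fB T (bribe_profile T) i h = lam i * (f + fB)"
proof -
  have rounds: "T - length h = Suc (Suc 0)" using len by simp
  have "payoff lam f fA fB T (bribe_profile T) i h
      = (\<Sum>j\<in>UNIV. lam j * (if j = i then f + lam i * fB else lam i * fB))"
    unfolding payoff_def rounds util_Suc_Suc_0
    using len unredeemed redeemed_snoc_unredeemed[OF unredeemed]
    by (intro sum.cong) (auto simp: bribe_profile_def fee_def)
  also have "\<dots> = lam i * (f + fB)"
    by (simp add: sum_mult_if_eq lam_sum algebra_simps)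
  finally show ?thesis .
qed

lemma payoff_include_A_two_rounds_left:
  fixes lam :: "'m::finite \<Rightarrow> real"
  assumes lam_sum: "(\<Sum>j\<in>UNIV. lam j) = 1"
    and len: "length h + 2 = T" and unredeemed: "\<not> redeemed h"
  shows "payoff lam f fA fB T ((bribe_profile T)(i := (bribe_profile T i)(h := IncA))) i h
      = lam i * (fA + lam i * f + (1 - lam i) * fB)"
proof -
  have rounds: "T - length h = Suc (Suc 0)" using len by simp
  have "payoff lam f fA fB T ((bribe_profile T)(i := (bribe_profile T i)(h := IncA))) i h
      = (\<Sum>j\<in>UNIV. lam j * (if j = i then fA + lam i * f else lam i * fB))"
    unfolding payoff_def rounds util_Suc_Suc_0
    using len unredeemed redeemed_snoc_unredeemed[OF unredeemed]
    by (intro sum.cong) (auto simp: bribe_profile_def fee_def)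
  also have "\<dots> = lam i * (fA + lam i * f + (1 - lam i) * fB)"
    by (simp add: sum_mult_if_eq lam_sum algebra_simps)
  finally show ?thesis .
qed

lemma is_SPE_bribe_profile_fee_bound:
  fixes lam :: "'m::finite \<Rightarrow> real"
  assumes spe: "is_SPE lam f fA fB T (bribe_profile T)"
    and lam_sum: "(\<Sum>j\<in>UNIV. lam j) = 1" and lam_pos: "lam i > 0"
    and T_ge: "T \<ge> 2"
  shows "fA - f \<le> lam i * (fB - f)"
proof -
  define h :: "'m hist" where "h = replicate (T - 2) (i, Unrel)"
  have len: "length h + 2 = T" using T_ge by (simp add: h_def)
  have unredeemed: "\<not> redeemed h" by (simp add: redeemed_def h_def)
  have "valid_hist T h"
    by (auto simp: valid_hist_def h_def feasible_def)
  moreover have "valid_strat T ((bribe_profile T i)(h := IncA))"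
    using unredeemed by (auto simp: valid_strat_def feasible_def bribe_profile_def)
  ultimately have "payoff lam f fA fB T ((bribe_profile T)(i := (bribe_profile T i)(h := IncA))) i h
      \<le> payoff lam f fA fB T (bribe_profile T) i h"
    using spe unfolding is_SPE_def by blast
  then have "lam i * (fA + lam i * f + (1 - lam i) * fB) \<le> lam i * (f + fB)"
    by (simp only: payoff_include_A_two_rounds_left[OF lam_sum len unredeemed]
        payoff_bribe_profile_two_rounds_left[OF lam_sum len unredeemed])
  then have "fA + lam i * f + (1 - lam i) * fB \<le> f + fB"
    using lam_pos by simp
  then show ?thesis by (simp add: algebra_simps)
qed

theorem corollary2:
  fixes lam :: "'m::finite \<Rightarrow> real"
    and f fA fB vdep :: real
    and T :: nat
  assumes lam_pos: "\<And>i. lam i > 0"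
    and lam_sum: "(\<Sum>i\<in>UNIV. lam i) = 1"
    and T_ge: "T \<ge> 2"
    and fB_le: "fB \<le> vdep"
    and fA_gt: "fA > Min (range lam) * (vdep - f) + f"
  shows "\<not> is_SPE lam f fA fB T (bribe_profile T)"
proof
  assume spe: "is_SPE lam f fA fB T (bribe_profile T)"
  have "Min (range lam) \<in> range lam"
    by (rule Min_in) auto
  then obtain i where lam_min: "lam i = Min (range lam)"
    by (metis imageE)
  have "fA - f \<le> lam i * (fB - f)"
    using is_SPE_bribe_profile_fee_bound[OF spe lam_sum lam_pos T_ge] .
  also have "\<dots> \<le> lam i * (vdep - f)"
    using fB_le lam_pos[of i] by simp
  finally show False
    using fA_gt lam_min by simp
qed

end
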